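(* Fix a positive integer $n$, a nonzero $n$-partition $\lambda$ with $\lambda_n=0$, an $n$-semistandard tableau $T$ of shape $\lambda$, and $1\le h\le d$. Then for every location $(j,i)\ge(\beta_h,1)$ (in reading order) for which $\pi^{(j,i)}$ is defined, we have $\Pi^{(j,i)}_{\zeta_h}=U(T;\beta_h,j,i)$.
   Context: Let $\lambda=(\lambda_1,\dots,\lambda_n)$ be weakly decreasing nonnegative integers with $\lambda_n=0$, $\lambda\ne0$, identified with its Young diagram. For $1\le j\le\lambda_1$ let $c_j$ be the length of column $j$; let $\zeta_1<\dots<\zeta_d$ be the distinct column lengths, $\zeta_0:=0$, $\zeta_{d+1}:=n$; for $1\le h\le d$ let $\beta_h$ be the index of the rightmost column of length $\zeta_h$. Write $(j,i)$ for the box in column $j$, row $i$. Reading order: $(l,k)\le(j,i)$ iff $l<j$, or $l=j$ and $k\ge i$; conventions: $(j,0)$ means $(j+1,c_{j+1})$ and $(j,c_j+1)$ means $(j-1,1)$. An $n$-semistandard tableau $T$ of shape $\lambda$ has entries in $[n]$, weakly increasing along rows, strictly increasing down columns; $T(j,i)$ is its entry and $C_j$ its $j$-th column. Scanning paths: the EWIS of a sequence $x_1,x_2,\dots$ is $x_{a_1},x_{a_2},\dots$ with $a_1=1$ and $a_b$ the smallest index $>a_{b-1}$ with $x_{a_b}\ge x_{a_{b-1}}$. For each column $l$ and $k=c_l,c_l-1,\dots,1$ in turn: delete the boxes of the previously computed $P(T;l,k')$, $k'>k$; form the sequence of entries in the lowest box of each of columns $l,\dots,\lambda_1$ of the current shape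 (skipping empty columns); $P(T;l,k)$ is the set of locations of the terms of its EWIS. For $1\le l<\lambda_1$, a location $(a,b)>(l,1)$ and $1\le k\le c_l$, the most recent value of $P(T;l,k)$ relative to $(a,b)$ is the entry of $T$ at the latest location of $P(T;l,k)$ strictly before $(a,b)$. For $1\le l<\lambda_1$ and $(l,1)\le(j,i)<(\lambda_1,1)$, $U(T;l,j,i)$ is the set of most recent values of the paths $P(T;l,k)$, $1\le k\le c_l$, relative to $(j,i-1)$; $U(T;l,\lambda_1,1)$ is the set of entries of $T$ at the final locations of the $P(T;l,k)$, $1\le k\le c_l$; and $U(T;\lambda_1,\lambda_1,1)$ is the set of entries of the rightmost column of $T$. Greedy procedure: $\pi^{(1,1)}$ has first $c_1$ entries those of $C_1$ increasing, followed by the rest of $[n]$ increasing. For $(j,i)$ with $j\ge2$ in reading order from $(2,c_2)$ to $(\lambda_1,1)$, define $\pi^{(j,i)}$ from $\pi:=\pi^{(j,i+1)}$: if $T(j-1,i)=T(j,i)$ set $\pi^{(j,i)}=\pi$; otherwise let $i_0=i$, and given $i_{x-1}$ with $\pi_{i_{x-1}}<T(j,i)$ let $i_x$ be the smallest index $>c_j$ with $\pi_{i_{x-1}}<\pi_{i_x}\le T(j,i)$, stopping at $i_m$ with $\pi_{i_m}=T(j,i)$; set $\pi^{(j,i)}_{i_x}=\pi_{i_{x-1}}$ ($1\le x\le m$), $\pi^{(j,i)}_{i_0}=\pi_{i_m}$, others unchanged. So $\pi^{(j,i)}$ is defined for $(j,i)=(1,1)$ and for all $(j,i)$ with $j\ge2$.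 For such $(j,i)$ and $1\le y\le n$, $\Pi^{(j,i)}_y:=\{\pi^{(j,i)}_1,\dots,\pi^{(j,i)}_y\}$. *)

theory Defs
  imports Main
begin

text \<open>Locations are pairs (j,i) = (column, row), 1-based.
  A tableau is a function T with T j i the entry in column j, row i.
  A partition lambda = (lambda_1,...,lambda_n) is a function lam with lam i = lambda_i for 1 <= i <= n.\<close>

type_synonym loc = "nat \<times> nat"

definition is_partition :: "nat \<Rightarrow> (nat \<Rightarrow> nat) \<Rightarrow> bool" where
  "is_partition n lam \<longleftrightarrow> 1 \<le> n \<and>
     (\<forall>i j. 1 \<le> i \<and> i \<le> j \<and> j \<le> n \<longrightarrow> lam j \<le> lam i) \<and>
     lam n = 0 \<and> (\<exists>i\<in>{1..n}. lam i \<noteq> 0)"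

definition shape :: "nat \<Rightarrow> (nat \<Rightarrow> nat) \<Rightarrow> loc set" where
  "shape n lam = {(j,i). 1 \<le> i \<and> i \<le> n \<and> 1 \<le> j \<and> j \<le> lam i}"

definition collen :: "nat \<Rightarrow> (nat \<Rightarrow> nat) \<Rightarrow> nat \<Rightarrow> nat" where
  "collen n lam j = card {i\<in>{1..n}. j \<le> lam i}"

definition semistandard :: "nat \<Rightarrow> (nat \<Rightarrow> nat) \<Rightarrow> (nat \<Rightarrow> nat \<Rightarrow> nat) \<Rightarrow> bool" where
  "semistandard n lam T \<longleftrightarrow>
     (\<forall>j i. (j,i) \<in> shape n lam \<longrightarrow> T j i \<in> {1..n}) \<and>
     (\<forall>j i. (j,i) \<in> shape n lam \<and> (j+1,i) \<in> shape n lam \<longrightarrow> T j i \<le> T (j+1) i) \<and>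
     (\<forall>j i. (j,i) \<in> shape n lam \<and> (j,i+1) \<in> shape n lam \<longrightarrow> T j i < T j (i+1))"

definition col_lengths :: "nat \<Rightarrow> (nat \<Rightarrow> nat) \<Rightarrow> nat set" where
  "col_lengths n lam = collen n lam ` {1..lam 1}"

definition ndist :: "nat \<Rightarrow> (nat \<Rightarrow> nat) \<Rightarrow> nat" where
  "ndist n lam = card (col_lengths n lam)"

definition zeta :: "nat \<Rightarrow> (nat \<Rightarrow> nat) \<Rightarrow> nat \<Rightarrow> nat" where
  "zeta n lam h = sorted_list_of_set (col_lengths n lam) ! (h - 1)"

definition beta :: "nat \<Rightarrow> (nat \<Rightarrow> nat) \<Rightarrow> nat \<Rightarrow> nat" where
  "beta n lam h = Max {j\<in>{1..lam 1}. collen n lam j = zeta n lam h}"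

definition rle :: "loc \<Rightarrow> loc \<Rightarrow> bool" where
  "rle p q \<longleftrightarrow> fst p < fst q \<or> (fst p = fst q \<and> snd q \<le> snd p)"

definition rlt :: "loc \<Rightarrow> loc \<Rightarrow> bool" where
  "rlt p q \<longleftrightarrow> rle p q \<and> p \<noteq> q"

definition rmax :: "loc set \<Rightarrow> loc" where
  "rmax S = (THE q. q \<in> S \<and> (\<forall>p\<in>S. rle p q))"

text \<open>Earliest weakly increasing subsequence of a sequence of (location, value) pairs;
  returns the locations of its terms.\<close>
fun ewis_from :: "nat \<Rightarrow> ('a \<times> nat) list \<Rightarrow> 'a list" where
  "ewis_from v [] = []"
| "ewis_from v ((p,x) # xs) = (if v \<le> x then p # ewis_from x xs else ewis_from v xs)"

fun ewis :: "('a \<times> nat) list \<Rightarrow> 'a list" where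
  "ewis [] = []"
| "ewis ((p,x) # xs) = p # ewis_from x xs"

definition lowest :: "loc set \<Rightarrow> nat \<Rightarrow> nat" where
  "lowest R j = Max {i. (j,i) \<in> R}"

definition scan_seq :: "(nat \<Rightarrow> nat) \<Rightarrow> (nat \<Rightarrow> nat \<Rightarrow> nat) \<Rightarrow> nat \<Rightarrow> loc set \<Rightarrow> (loc \<times> nat) list" where
  "scan_seq lam T l R =
     map (\<lambda>j. ((j, lowest R j), T j (lowest R j))) (filter (\<lambda>j. \<exists>i. (j,i) \<in> R) [l..<lam 1 + 1])"

definition scan_path :: "(nat \<Rightarrow> nat) \<Rightarrow> (nat \<Rightarrow> nat \<Rightarrow> nat) \<Rightarrow> nat \<Rightarrow> loc set \<Rightarrow> loc list" where
  "scan_path lam T l R = ewis (scan_seq lam T l R)"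

text \<open>removed n lam T l m = union of the paths P(T;l,k) for k = c_l, ..., c_l - m + 1.\<close>
primrec removed :: "nat \<Rightarrow> (nat \<Rightarrow> nat) \<Rightarrow> (nat \<Rightarrow> nat \<Rightarrow> nat) \<Rightarrow> nat \<Rightarrow> nat \<Rightarrow> loc set" where
  "removed n lam T l 0 = {}"
| "removed n lam T l (Suc m) =
     removed n lam T l m \<union> set (scan_path lam T l (shape n lam - removed n lam T l m))"

definition P :: "nat \<Rightarrow> (nat \<Rightarrow> nat) \<Rightarrow> (nat \<Rightarrow> nat \<Rightarrow> nat) \<Rightarrow> nat \<Rightarrow> nat \<Rightarrow> loc set" where
  "P n lam T l k = set (scan_path lam T l (shape n lam - removed n lam T l (collen n lam l - k)))"

definition most_recent :: "(nat \<Rightarrow> nat \<Rightarrow> nat) \<Rightarrow> loc set \<Rightarrow> loc \<Rightarrow> nat" where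
  "most_recent T S a = (case rmax {q\<in>S. rlt q a} of (x,y) \<Rightarrow> T x y)"

text \<open>The location (j,i-1), with the convention (j,0) = (j+1,c_{j+1}).\<close>
definition prev_row_loc :: "nat \<Rightarrow> (nat \<Rightarrow> nat) \<Rightarrow> loc \<Rightarrow> loc" where
  "prev_row_loc n lam p = (if snd p = 1 then (fst p + 1, collen n lam (fst p + 1)) else (fst p, snd p - 1))"

definition U :: "nat \<Rightarrow> (nat \<Rightarrow> nat) \<Rightarrow> (nat \<Rightarrow> nat \<Rightarrow> nat) \<Rightarrow> nat \<Rightarrow> nat \<Rightarrow> nat \<Rightarrow> nat set" where
  "U n lam T l j i =
    (if l = lam 1 \<and> j = lam 1 \<and> i = 1 then (\<lambda>k. T (lam 1) k) ` {1..collen n lam (lam 1)}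
     else if (j,i) = (lam 1, 1) then (\<lambda>k. case rmax (P n lam T l k) of (x,y) \<Rightarrow> T x y) ` {1..collen n lam l}
     else (\<lambda>k. most_recent T (P n lam T l k) (prev_row_loc n lam (j,i))) ` {1..collen n lam l})"

text \<open>Greedy procedure. Permutations are functions on indices 1..n.\<close>
definition pi11 :: "nat \<Rightarrow> (nat \<Rightarrow> nat) \<Rightarrow> (nat \<Rightarrow> nat \<Rightarrow> nat) \<Rightarrow> nat \<Rightarrow> nat" where
  "pi11 n lam T = (\<lambda>i. (sorted_list_of_set (T 1 ` {1..collen n lam 1})
       @ sorted_list_of_set ({1..n} - T 1 ` {1..collen n lam 1})) ! (i - 1))"

text \<open>The indices i_1, ..., i_m of the chain starting at i_0 = idx (fuel bounds the length).\<close>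
fun gchain :: "nat \<Rightarrow> (nat \<Rightarrow> nat) \<Rightarrow> nat \<Rightarrow> nat \<Rightarrow> nat \<Rightarrow> nat \<Rightarrow> nat list" where
  "gchain 0 pi n cj t idx = []"
| "gchain (Suc f) pi n cj t idx =
     (if pi idx < t \<and> (\<exists>k. cj < k \<and> k \<le> n \<and> pi idx < pi k \<and> pi k \<le> t)
      then (let k = (LEAST k. cj < k \<and> k \<le> n \<and> pi idx < pi k \<and> pi k \<le> t)
            in k # gchain f pi n cj t k)
      else [])"

definition gstep :: "nat \<Rightarrow> (nat \<Rightarrow> nat) \<Rightarrow> (nat \<Rightarrow> nat \<Rightarrow> nat) \<Rightarrow> loc \<Rightarrow> (nat \<Rightarrow> nat) \<Rightarrow> (nat \<Rightarrow> nat)" where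
  "gstep n lam T p pi =
    (let j = fst p; i = snd p in
     if T (j - 1) i = T j i then pi
     else (let is = i # gchain n pi n (collen n lam j) (T j i) i in
           (foldl (\<lambda>rho (a,b). rho(b := pi a)) pi (zip is (tl is)))(i := pi (last is))))"

definition greedy_locs :: "nat \<Rightarrow> (nat \<Rightarrow> nat) \<Rightarrow> loc list" where
  "greedy_locs n lam = concat (map (\<lambda>j. map (\<lambda>i. (j,i)) (rev [1..<collen n lam j + 1])) [2..<lam 1 + 1])"

definition pi_at :: "nat \<Rightarrow> (nat \<Rightarrow> nat) \<Rightarrow> (nat \<Rightarrow> nat \<Rightarrow> nat) \<Rightarrow> loc \<Rightarrow> (nat \<Rightarrow> nat)" where
  "pi_at n lam T p = foldl (\<lambda>rho q. gstep n lam T q rho) (pi11 n lam T) (filter (\<lambda>q. rle q p) (greedy_locs n lam))"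

definition pi_defined :: "nat \<Rightarrow> (nat \<Rightarrow> nat) \<Rightarrow> loc \<Rightarrow> bool" where
  "pi_defined n lam p \<longleftrightarrow> p = (1,1) \<or> (2 \<le> fst p \<and> p \<in> shape n lam)"

definition Pi_set :: "(nat \<Rightarrow> nat) \<Rightarrow> nat \<Rightarrow> nat set" where
  "Pi_set pi y = pi ` {1..y}"

end

theory Submission
  imports Defs
begin

text \<open>
  Both sides of the identity change by the same rule as the reading order passes a box (j,i)
  of a column j > l. With z = c_l, the greedy step replaces, inside the first z values of \<pi>,
  the largest value \<le> T(j,i) by T(j,i): its chain of moves is a rotation along indices with
  increasing values, and the indices inside {1..z} form an initial segment of the chain.
  On the scanning side exactly one of the c_l paths P(T;l,k) passes through (j,i). Its most
  recent value changes from some v \<le> T(j,i) to T(j,i), the paths above it have most recent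
  values > T(j,i), and those below it have values < v, because most recent values strictly
  increase with k. So the set of most recent values undergoes the same replacement. At the
  start of column l both sets are the entries of column l, and induction along the reading
  order gives the theorem, for every column l and not only for l = \<beta>_h.
\<close>

locale tableau =
  fixes n :: nat and lam :: "nat \<Rightarrow> nat" and T :: "nat \<Rightarrow> nat \<Rightarrow> nat"
  assumes partition: "is_partition n lam" and semistandard: "semistandard n lam T"
begin

abbreviation c where "c j \<equiv> collen n lam j"

lemma lam_antimono: "1 \<le> i \<Longrightarrow> i \<le> i' \<Longrightarrow> i' \<le> n \<Longrightarrow> lam i' \<le> lam i"
  using partition by (simp add: is_partition_def)

lemma column_rows: "{i\<in>{1..n}. j \<le> lam i} = {1..c j}"
proof (cases "{i\<in>{1..n}. j \<le> lam i} = {}")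
  case True
  then show ?thesis by (simp add: collen_def)
next
  case False
  let ?A = "{i\<in>{1..n}. j \<le> lam i}"
  have M: "Max ?A \<in> ?A" using False by (intro Max_in) auto
  have eq: "?A = {1..Max ?A}"
  proof
    show "?A \<subseteq> {1..Max ?A}" by auto
    show "{1..Max ?A} \<subseteq> ?A"
      using M lam_antimono[of _ "Max ?A"] by (auto intro: order_trans)
  qed
  have "card ?A = card {1..Max ?A}" using eq by (rule arg_cong)
  also have "\<dots> = Max ?A" by simp
  finally show ?thesis unfolding collen_def using eq by (rule ssubst[where P="\<lambda>m. ?A = {1..m}"])
qed

lemma collen_le: "c j \<le> n"
proof -
  have "card {i\<in>{1..n}. j \<le> lam i} \<le> card {1..n}" by (rule card_mono) auto
  then show ?thesis by (simp add: collen_def)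
qed

lemma collen_antimono: "j \<le> j' \<Longrightarrow> c j' \<le> c j"
  unfolding collen_def by (intro card_mono) auto

lemma collen_beyond: "lam 1 < j \<Longrightarrow> c j = 0"
proof -
  assume "lam 1 < j"
  then have "{i\<in>{1..n}. j \<le> lam i} = {}" using lam_antimono[of 1] by fastforce
  then show ?thesis by (simp add: collen_def)
qed

lemma in_shape_iff: "(j,i) \<in> shape n lam \<longleftrightarrow> 1 \<le> j \<and> 1 \<le> i \<and> i \<le> c j"
  using column_rows[of j] unfolding shape_def by (auto simp: set_eq_iff)

lemma entry_range: "1 \<le> j \<Longrightarrow> 1 \<le> i \<Longrightarrow> i \<le> c j \<Longrightarrow> T j i \<in> {1..n}"
  using semistandard in_shape_iff unfolding semistandard_def by blast

lemma column_strict: "1 \<le> j \<Longrightarrow> 1 \<le> i \<Longrightarrow> i < i' \<Longrightarrow> i' \<le> c j \<Longrightarrow> T j i < T j i'"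
proof (induction i' rule: less_induct)
  case (less i')
  have step: "T j r < T j (r + 1)" if "1 \<le> r" "r < c j" for r
    using semistandard that in_shape_iff less.prems(1) unfolding semistandard_def by auto
  show ?case
  proof (cases "i' = Suc i")
    case True
    then show ?thesis using step less.prems by simp
  next
    case False
    then have "T j i < T j (i' - 1)" using less by auto
    also have "\<dots> < T j i'" using step[of "i' - 1"] less.prems by simp
    finally show ?thesis .
  qed
qed

lemma column_mono: "1 \<le> j \<Longrightarrow> 1 \<le> i \<Longrightarrow> i \<le> i' \<Longrightarrow> i' \<le> c j \<Longrightarrow> T j i \<le> T j i'"
  using column_strict[of j i i'] by (cases "i = i'") auto

lemma row_mono: "2 \<le> j \<Longrightarrow> 1 \<le> i \<Longrightarrow> i \<le> c j \<Longrightarrow> T (j-1) i \<le> T j i"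
proof -
  assume a: "2 \<le> j" "1 \<le> i" "i \<le> c j"
  then have "(j-1,i) \<in> shape n lam" "(j-1+1,i) \<in> shape n lam"
    using collen_antimono[of "j-1" j] in_shape_iff by auto
  then have "T (j-1) i \<le> T (j-1+1) i" using semistandard by (auto simp: semistandard_def)
  then show ?thesis using a by simp
qed

end

section \<open>Replacing the largest value below a threshold\<close>

definition bump :: "nat set \<Rightarrow> nat \<Rightarrow> nat set" where
  "bump S t = S - {Max {x \<in> S. x \<le> t}} \<union> {t}"

lemma image_rotate_prefix:
  assumes inj: "inj_on pi A" and B: "B \<subseteq> A"
    and p: "p ` {..m} \<subseteq> A" "inj_on p {..m}"
    and k: "k \<le> m" "\<And>x. x \<le> m \<Longrightarrow> p x \<in> B \<longleftrightarrow> x \<le> k"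
    and rho0: "rho (p 0) = t"
    and rho_Suc: "\<And>x. x < m \<Longrightarrow> rho (p (Suc x)) = pi (p x)"
    and rho_out: "\<And>r. r \<in> A - p ` {..m} \<Longrightarrow> rho r = pi r"
  shows "rho ` B = pi ` B - {pi (p k)} \<union> {t}"
proof -
  have Bsplit: "B = (B - p ` {..m}) \<union> p ` {..k}"
    using k by (fastforce simp: image_iff)
  have prefix: "p ` {..k} = insert (p 0) (p ` Suc ` {..<k})"
    by (auto simp: image_iff lessThan_Suc_atMost[symmetric] lessThan_Suc_eq_insert_0)
  have "rho ` p ` {..k} = insert t (pi ` p ` {..<k})"
    using k rho0 rho_Suc unfolding prefix by (auto simp: image_iff)
  moreover have "rho ` (B - p ` {..m}) = pi ` (B - p ` {..m})"
    using B rho_out by (intro image_cong) auto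
  moreover have "rho ` B = rho ` (B - p ` {..m}) \<union> rho ` p ` {..k}"
    by (metis Bsplit image_Un)
  ultimately have "rho ` B = pi ` (B - p ` {..m}) \<union> pi ` p ` {..<k} \<union> {t}"
    by auto
  also have "pi ` (B - p ` {..m}) \<union> pi ` p ` {..<k} = pi ` (B - {p k})"
  proof -
    have "p k \<notin> p ` {..<k}"
    proof
      assume "p k \<in> p ` {..<k}"
      then obtain x where "x < k" "p k = p x" by auto
      then show False using inj_onD[OF p(2), of k x] k(1) by simp
    qed
    moreover have "{..k} = insert k {..<k}" by auto
    ultimately have "B - {p k} = (B - p ` {..m}) \<union> p ` {..<k}"
      using k(1) by (subst Bsplit) auto
    then show ?thesis by auto
  qed
  also have "pi ` (B - {p k}) = pi ` B - {pi (p k)}"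
    using inj_on_image_set_diff[OF inj, of B "{p k}"] B p k by auto
  finally show ?thesis .
qed

lemma prefix_below_threshold:
  fixes v p :: "nat \<Rightarrow> nat"
  assumes mono: "\<And>x y. x < y \<Longrightarrow> y \<le> m \<Longrightarrow> v x < v y"
    and start: "p 0 \<le> z" "v 0 \<le> M" and stop: "M \<le> v m"
    and advance: "\<And>x. x < m \<Longrightarrow> v x < M \<Longrightarrow> p (Suc x) \<le> z"
    and bound: "\<And>x. x \<le> m \<Longrightarrow> p x \<le> z \<Longrightarrow> v x \<le> M"
  obtains k where "k \<le> m" "v k = M" "\<And>x. x \<le> m \<Longrightarrow> p x \<le> z \<longleftrightarrow> x \<le> k"
proof -
  have hit: "\<exists>k\<le>m. v k = M"
  proof (rule ccontr)
    assume miss: "\<not> (\<exists>k\<le>m. v k = M)"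
    have "x \<le> m \<Longrightarrow> v x < M" for x
    proof (induction x)
      case 0
      then show ?case using start miss by force
    next
      case (Suc x)
      then have "p (Suc x) \<le> z" using advance by simp
      then show ?case using bound[of "Suc x"] miss Suc.prems by force
    qed
    then show False using stop by fastforce
  qed
  then obtain k where k: "k \<le> m" "v k = M" by blast
  have "p x \<le> z \<longleftrightarrow> x \<le> k" if x: "x \<le> m" for x
  proof
    assume "p x \<le> z"
    then have "v x \<le> v k" using bound x k by simp
    then show "x \<le> k" using mono[of k x] x by fastforce
  next
    assume "x \<le> k"
    then show "p x \<le> z"
      using start(1) advance[of "x - 1"] mono[of "x - 1" k] k by (cases x) auto
  qed
  with k that show ?thesis by blast
qed

section \<open>One step of the greedy procedure\<close>

abbreviation chain_cand :: "(nat \<Rightarrow> nat) \<Rightarrow> nat \<Rightarrow> nat \<Rightarrow> nat \<Rightarrow> nat \<Rightarrow> nat \<Rightarrow> bool" where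
  "chain_cand pi n cj t v k \<equiv> cj < k \<and> k \<le> n \<and> v < pi k \<and> pi k \<le> t"

lemma gchain_Suc_stop:
  "\<not> (pi idx < t \<and> (\<exists>k. chain_cand pi n cj t (pi idx) k)) \<Longrightarrow> gchain (Suc f) pi n cj t idx = []"
  unfolding gchain.simps(2) by (rule if_not_P)

lemma gchain_Suc_step:
  assumes "pi idx < t" "chain_cand pi n cj t (pi idx) k0"
  obtains k where "gchain (Suc f) pi n cj t idx = k # gchain f pi n cj t k"
    and "chain_cand pi n cj t (pi idx) k"
    and "\<And>k'. chain_cand pi n cj t (pi idx) k' \<Longrightarrow> k \<le> k'"
proof
  let ?k = "LEAST k. chain_cand pi n cj t (pi idx) k"
  show "gchain (Suc f) pi n cj t idx = ?k # gchain f pi n cj t ?k"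
    using assms by (auto simp: Let_def)
  show "chain_cand pi n cj t (pi idx) ?k" using assms(2) by (rule LeastI)
  show "\<And>k'. chain_cand pi n cj t (pi idx) k' \<Longrightarrow> ?k \<le> k'" by (rule Least_le)
qed

lemma gchain_subset: "set (gchain f pi n cj t idx) \<subseteq> {k. cj < k \<and> k \<le> n \<and> pi k \<le> t}"
proof (induction f arbitrary: idx)
  case (Suc f)
  show ?case
  proof (cases "pi idx < t \<and> (\<exists>k. chain_cand pi n cj t (pi idx) k)")
    case True
    then obtain k where e: "gchain (Suc f) pi n cj t idx = k # gchain f pi n cj t k"
      and k: "chain_cand pi n cj t (pi idx) k" using gchain_Suc_step by blast
    show ?thesis unfolding e using Suc.IH[of k] k by auto
  next
    case False
    then show ?thesis by (simp only: gchain_Suc_stop[OF False]) simp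
  qed
qed simp

lemma gchain_sorted: "sorted_wrt (\<lambda>x y. pi x < pi y) (idx # gchain f pi n cj t idx)"
proof (induction f arbitrary: idx)
  case (Suc f)
  show ?case
  proof (cases "pi idx < t \<and> (\<exists>k. chain_cand pi n cj t (pi idx) k)")
    case True
    then obtain k where e: "gchain (Suc f) pi n cj t idx = k # gchain f pi n cj t k"
      and k: "chain_cand pi n cj t (pi idx) k" using gchain_Suc_step by blast
    show ?thesis unfolding e using Suc.IH[of k] k by auto
  next
    case False
    then show ?thesis by (simp only: gchain_Suc_stop[OF False]) simp
  qed
qed simp

lemma gchain_least:
  "x < length (gchain f pi n cj t idx) \<Longrightarrow>
   chain_cand pi n cj t (pi ((idx # gchain f pi n cj t idx) ! x)) k \<Longrightarrow>
   gchain f pi n cj t idx ! x \<le> k"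
proof (induction f arbitrary: idx x)
  case (Suc f)
  show ?case
  proof (cases "pi idx < t \<and> (\<exists>k. chain_cand pi n cj t (pi idx) k)")
    case True
    then obtain k1 where e: "gchain (Suc f) pi n cj t idx = k1 # gchain f pi n cj t k1"
      and least: "\<And>k'. chain_cand pi n cj t (pi idx) k' \<Longrightarrow> k1 \<le> k'" using gchain_Suc_step by blast
    show ?thesis
      using Suc.prems Suc.IH[of "x - 1" k1] least[of k] unfolding e by (cases x) auto
  next
    case False
    then show ?thesis using Suc.prems(1) gchain_Suc_stop[OF False] by simp
  qed
qed simp

text \<open>The fuel f only has to cover the strict increases of the values from \<pi> idx up to t,
  so the fuel n used by gstep suffices.\<close>

lemma gchain_last:
  "pi idx \<le> t \<Longrightarrow> t - pi idx \<le> f \<Longrightarrow> cj < k0 \<Longrightarrow> k0 \<le> n \<Longrightarrow> pi k0 = t \<Longrightarrow>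
   pi (last (idx # gchain f pi n cj t idx)) = t"
proof (induction f arbitrary: idx)
  case (Suc f)
  show ?case
  proof (cases "pi idx < t")
    case True
    then have "chain_cand pi n cj t (pi idx) k0" using Suc.prems by simp
    then obtain k where e: "gchain (Suc f) pi n cj t idx = k # gchain f pi n cj t k"
      and k: "chain_cand pi n cj t (pi idx) k"
      using gchain_Suc_step[where pi = pi and idx = idx and t = t, OF True] by blast
    have "pi (last (k # gchain f pi n cj t k)) = t"
      by (rule Suc.IH) (use k Suc.prems in auto)
    then show ?thesis by (simp only: e) simp
  next
    case False
    then have "gchain (Suc f) pi n cj t idx = []" by (intro gchain_Suc_stop) simp
    then show ?thesis using False Suc.prems(1) by simp
  qed
qed simp

lemma foldl_shift_other:
  "k \<notin> snd ` set ps \<Longrightarrow> foldl (\<lambda>rho (a,b). rho(b := pi a)) r0 ps k = r0 k"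
  by (induction ps arbitrary: r0) auto

lemma foldl_shift_at:
  "distinct (map snd ps) \<Longrightarrow> (a,b) \<in> set ps \<Longrightarrow> foldl (\<lambda>rho (a,b). rho(b := pi a)) r0 ps b = pi a"
proof (induction ps arbitrary: r0)
  case (Cons p ps)
  obtain a' b' where p: "p = (a',b')" by fastforce
  show ?case
  proof (cases "(a,b) = p")
    case True
    then have notin: "b \<notin> snd ` set ps" using Cons.prems p by auto
    have "foldl (\<lambda>rho (a,b). rho(b := pi a)) r0 (p # ps) =
        foldl (\<lambda>rho (a,b). rho(b := pi a)) (r0(b' := pi a')) ps" using p by simp
    then show ?thesis using True p by (simp only: foldl_shift_other[OF notin]) simp
  next
    case False
    then have "(a,b) \<in> set ps" using Cons.prems p by auto
    then have "foldl (\<lambda>rho (a,b). rho(b := pi a)) (r0(b' := pi a')) ps b = pi a"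
      using Cons.prems by (intro Cons.IH) simp_all
    moreover have "foldl (\<lambda>rho (a,b). rho(b := pi a)) r0 (p # ps) =
        foldl (\<lambda>rho (a,b). rho(b := pi a)) (r0(b' := pi a')) ps" using p by simp
    ultimately show ?thesis by (simp only:)
  qed
qed simp

lemma chain_rotation:
  assumes "distinct (i # ks)"
    and rho: "rho = (foldl (\<lambda>rho (a,b). rho(b := pi a)) pi (zip (i # ks) ks))(i := pi (last (i # ks)))"
  shows "rho i = pi (last (i # ks))"
    and "x < length ks \<Longrightarrow> rho (ks ! x) = pi ((i # ks) ! x)"
    and "k \<notin> set (i # ks) \<Longrightarrow> rho k = pi k"
proof -
  have snd_zip: "map snd (zip (i # ks) ks) = ks" by (simp add: map_snd_zip_take)
  show "rho i = pi (last (i # ks))" using rho by simp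
  show "x < length ks \<Longrightarrow> rho (ks ! x) = pi ((i # ks) ! x)"
  proof -
    assume x: "x < length ks"
    then have "((i # ks) ! x, ks ! x) \<in> set (zip (i # ks) ks)" by (auto simp: set_zip)
    moreover have "ks ! x \<noteq> i" using assms(1) x by (auto simp: in_set_conv_nth)
    ultimately show ?thesis using assms snd_zip by (simp add: foldl_shift_at)
  qed
  have "snd ` set (zip (i # ks) ks) = set ks" using snd_zip by (metis set_map)
  then show "k \<notin> set (i # ks) \<Longrightarrow> rho k = pi k"
    using rho by (simp add: foldl_shift_other)
qed

lemma gchain_nth:
  fixes pi :: "nat \<Rightarrow> nat" and n cj t i :: nat
  defines "iss \<equiv> i # gchain n pi n cj t i"
  shows gchain_nth_mono: "x < y \<Longrightarrow> y < length iss \<Longrightarrow> pi (iss ! x) < pi (iss ! y)"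
    and gchain_nth_range: "0 < x \<Longrightarrow> x < length iss \<Longrightarrow> cj < iss ! x \<and> iss ! x \<le> n"
    and gchain_nth_least:
      "Suc x < length iss \<Longrightarrow> chain_cand pi n cj t (pi (iss ! x)) k \<Longrightarrow> iss ! Suc x \<le> k"
    and gchain_distinct: "distinct iss"
proof -
  have sorted: "sorted_wrt (\<lambda>x y. pi x < pi y) iss" unfolding iss_def by (rule gchain_sorted)
  then show "x < y \<Longrightarrow> y < length iss \<Longrightarrow> pi (iss ! x) < pi (iss ! y)"
    by (simp add: sorted_wrt_iff_nth_less)
  show "0 < x \<Longrightarrow> x < length iss \<Longrightarrow> cj < iss ! x \<and> iss ! x \<le> n"
    using gchain_subset[of n pi n cj t i] unfolding iss_def
    by (cases x) (auto dest: nth_mem)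
  show "Suc x < length iss \<Longrightarrow> chain_cand pi n cj t (pi (iss ! x)) k \<Longrightarrow> iss ! Suc x \<le> k"
    unfolding iss_def using gchain_least[of x n pi n cj t i k] by simp
  have "sorted_wrt (<) (map pi iss)" using sorted by (simp add: sorted_wrt_map)
  then show "distinct iss" by (simp add: strict_sorted_iff distinct_map)
qed

lemma gchain_threshold:
  fixes pi :: "nat \<Rightarrow> nat" and n cj t i z :: nat
  defines "iss \<equiv> i # gchain n pi n cj t i"
  assumes i: "1 \<le> i" "i \<le> cj" and z: "cj \<le> z" "z \<le> n"
    and low: "\<And>r. 1 \<le> r \<Longrightarrow> r \<le> cj \<Longrightarrow> pi r \<le> t \<Longrightarrow> pi r \<le> pi i"
    and t: "pi i < t" and last: "pi (last iss) = t"
  obtains k where "k < length iss" "pi (iss ! k) = Max {x \<in> pi ` {1..z}. x \<le> t}"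
    "\<And>x. x < length iss \<Longrightarrow> iss ! x \<le> z \<longleftrightarrow> x \<le> k"
proof -
  define m where "m = length iss - 1"
  define M where "M = Max {x \<in> pi ` {1..z}. x \<le> t}"
  have len: "length iss = Suc m" unfolding m_def iss_def by simp
  have "last iss = iss ! m" using len last_conv_nth[of iss] unfolding iss_def by simp
  then have vm: "pi (iss ! m) = t" using last by simp
  have vmono: "pi (iss ! x) < pi (iss ! y)" if "x < y" "y \<le> m" for x y
    using that len unfolding iss_def by (intro gchain_nth_mono) auto
  have pos: "1 \<le> iss ! x" if "x \<le> m" for x
    using gchain_nth_range[of x i n pi cj t] that len i unfolding iss_def by (cases x) auto
  have "M \<in> {x \<in> pi ` {1..z}. x \<le> t}" unfolding M_def
    using i z t by (intro Max_in) (auto intro!: bexI[of _ i])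
  then obtain pM where pM: "pM \<in> {1..z}" "pi pM = M" "M \<le> t" by auto
  have M_ge: "\<And>y. y \<in> pi ` {1..z} \<Longrightarrow> y \<le> t \<Longrightarrow> y \<le> M" unfolding M_def by simp
  have advance: "iss ! Suc x \<le> z" if x: "x < m" "pi (iss ! x) < M" for x
  proof -
    have "pi i \<le> pi (iss ! x)" using vmono[of 0 x] x unfolding iss_def by (cases x) auto
    then have "cj < pM" using low[of pM] pM x by fastforce
    then have "iss ! Suc x \<le> pM" using x pM len z unfolding iss_def by (intro gchain_nth_least) auto
    then show ?thesis using pM by simp
  qed
  have bound: "pi (iss ! x) \<le> M" if x: "x \<le> m" "iss ! x \<le> z" for x
  proof -
    have "pi (iss ! x) \<le> t" using vmono[of x m] vm x by (cases "x = m") auto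
    moreover have "pi (iss ! x) \<in> pi ` {1..z}" using pos[OF x(1)] x(2) by auto
    ultimately show ?thesis by (rule M_ge[rotated])
  qed
  obtain k where k: "k \<le> m" "pi (iss ! k) = M" "\<And>x. x \<le> m \<Longrightarrow> iss ! x \<le> z \<longleftrightarrow> x \<le> k"
  proof (rule prefix_below_threshold[of m "\<lambda>x. pi (iss ! x)" "(!) iss" z M])
    show "iss ! 0 \<le> z" "pi (iss ! 0) \<le> M" using i z t M_ge unfolding iss_def by auto
  qed (use vmono vm pM advance bound in auto)
  show ?thesis
  proof (rule that[of k])
    show "k < length iss" using k(1) len by simp
    show "pi (iss ! k) = Max {x \<in> pi ` {1..z}. x \<le> t}" using k(2) unfolding M_def .
    show "\<And>x. x < length iss \<Longrightarrow> iss ! x \<le> z \<longleftrightarrow> x \<le> k" using k(3) len by simp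
  qed
qed

lemma gchain_bump:
  fixes pi :: "nat \<Rightarrow> nat"
  assumes bij: "bij_betw pi {1..n} {1..n}"
    and i: "1 \<le> i" "i \<le> cj" and z: "cj \<le> z" "z \<le> n"
    and low: "\<And>r. 1 \<le> r \<Longrightarrow> r \<le> cj \<Longrightarrow> pi r \<le> t \<Longrightarrow> pi r \<le> pi i"
    and t: "pi i < t" "t \<le> n"
    and ks: "ks = gchain n pi n cj t i"
    and rho: "rho = (foldl (\<lambda>rho (a,b). rho(b := pi a)) pi (zip (i # ks) ks))(i := pi (last (i # ks)))"
  shows "rho ` {1..z} = bump (pi ` {1..z}) t"
    and "\<And>r. r \<noteq> i \<Longrightarrow> r \<le> cj \<Longrightarrow> rho r = pi r"
    and "rho i = t"
proof -
  let ?iss = "i # ks"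
  have "t \<in> pi ` {1..n}" using bij_betw_imp_surj_on[OF bij] t by auto
  then obtain k0 where k0: "k0 \<in> {1..n}" "pi k0 = t" by auto
  have "cj < k0" using low[of k0] k0 t by (cases "cj < k0") auto
  then have last: "pi (last ?iss) = t" unfolding ks using gchain_last[of pi i t n cj k0] k0 t by simp
  obtain k where k: "k < length ?iss" "pi (?iss ! k) = Max {x \<in> pi ` {1..z}. x \<le> t}"
    "\<And>x. x < length ?iss \<Longrightarrow> ?iss ! x \<le> z \<longleftrightarrow> x \<le> k"
    using gchain_threshold[where pi = pi and i = i and t = t, OF i z low t(1)] last
    unfolding ks by blast
  have distinct: "distinct ?iss" unfolding ks by (rule gchain_distinct)
  have range: "?iss ! x \<in> {1..n}" if "x < length ?iss" for x
    using gchain_nth_range[of x i n pi cj t] that i z unfolding ks by (cases x) auto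
  have set_iss: "set ?iss = (!) ?iss ` {..length ks}"
  proof -
    have "(!) ?iss ` {0..<length ?iss} = set (take (length ?iss) ?iss)" by (rule nth_image) simp
    then show ?thesis by (simp add: atLeast0LessThan lessThan_Suc_atMost)
  qed
  note rotation = chain_rotation[OF distinct rho]
  have "rho ` {1..z} = pi ` {1..z} - {pi (?iss ! k)} \<union> {t}"
  proof (rule image_rotate_prefix[where p = "(!) ?iss" and m = "length ks" and k = k,
        OF bij_betw_imp_inj_on[OF bij]])
    show "inj_on ((!) ?iss) {..length ks}" using distinct by (intro inj_on_nth) auto
    show "\<And>x. x \<le> length ks \<Longrightarrow> ?iss ! x \<in> {1..z} \<longleftrightarrow> x \<le> k" using k(3) range by fastforce
    show "rho (?iss ! 0) = t" using rotation(1) last by simp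
    show "\<And>x. x < length ks \<Longrightarrow> rho (?iss ! Suc x) = pi (?iss ! x)" using rotation(2) by simp
    show "\<And>r. r \<in> {1..n} - (!) ?iss ` {..length ks} \<Longrightarrow> rho r = pi r"
      using rotation(3) unfolding set_iss by blast
  qed (use z range k(1) in auto)
  then show "rho ` {1..z} = bump (pi ` {1..z}) t" using k(2) unfolding bump_def by simp
  show "\<And>r. r \<noteq> i \<Longrightarrow> r \<le> cj \<Longrightarrow> rho r = pi r"
    using rotation(3) gchain_subset[of n pi n cj t i] ks by fastforce
  show "rho i = t" using rotation(1) last by simp
qed

lemma bump_mem: "finite S \<Longrightarrow> t \<in> S \<Longrightarrow> bump S t = S"
  unfolding bump_def by (subst Max_eqI[of _ t]) auto

context tableau
begin

definition greedy_inv :: "(nat \<Rightarrow> nat) \<Rightarrow> nat \<Rightarrow> nat \<Rightarrow> bool" where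
  "greedy_inv pi j i \<longleftrightarrow> bij_betw pi {1..n} {1..n} \<and>
     (\<forall>r. 1 \<le> r \<and> r \<le> c j \<longrightarrow> pi r = (if i \<le> r then T j r else T (j-1) r))"

lemma greedy_inv_below:
  assumes j: "2 \<le> j" and i: "1 \<le> i" "i \<le> c j" and inv: "greedy_inv pi j (Suc i)"
    and r: "1 \<le> r" "r \<le> c j" "pi r \<le> T j i"
  shows "pi r \<le> pi i"
proof (cases "Suc i \<le> r")
  case True
  then have "T j i < T j r" using column_strict[of j i r] j i r by simp
  then show ?thesis using inv r True unfolding greedy_inv_def by auto
next
  case False
  have "T (j-1) r \<le> T (j-1) i"
    using column_mono[of "j-1" r i] collen_antimono[of "j-1" j] False r i j by simp
  then show ?thesis using inv r i False unfolding greedy_inv_def by auto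
qed

lemma gstep_chain:
  assumes j: "2 \<le> j" and i: "1 \<le> i" "i \<le> c j" and inv: "greedy_inv pi j (Suc i)"
    and differ: "T (j-1) i \<noteq> T j i"
  shows "greedy_inv (gstep n lam T (j,i) pi) j i"
    and "c j \<le> z \<Longrightarrow> z \<le> n \<Longrightarrow> Pi_set (gstep n lam T (j,i) pi) z = bump (Pi_set pi z) (T j i)"
proof -
  define rho where "rho = gstep n lam T (j,i) pi"
  define ks where "ks = gchain n pi n (c j) (T j i) i"
  have bij: "bij_betw pi {1..n} {1..n}" using inv by (simp add: greedy_inv_def)
  have vals: "\<And>r. 1 \<le> r \<Longrightarrow> r \<le> c j \<Longrightarrow> pi r = (if Suc i \<le> r then T j r else T (j-1) r)"
    using inv by (simp add: greedy_inv_def)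
  have t: "T j i \<in> {1..n}" using entry_range j i by simp
  have rho: "rho = (foldl (\<lambda>rho (a,b). rho(b := pi a)) pi (zip (i # ks) ks))(i := pi (last (i # ks)))"
    using differ unfolding rho_def ks_def gstep_def by (simp add: Let_def)
  have lt: "pi i < T j i" using vals[of i] row_mono j i differ by fastforce
  have tn: "T j i \<le> n" using t by simp
  note chain = gchain_bump[OF bij i _ _ greedy_inv_below[OF j i inv] lt tn ks_def rho]
  note chain_id = chain(2,3)[OF collen_le order_refl]
  have "rho ` {1..n} = {1..n}"
    using chain(1)[of n] bij_betw_imp_surj_on[OF bij] t collen_le by (simp add: bump_mem)
  then have "bij_betw rho {1..n} {1..n}" by (simp add: bij_betw_def eq_card_imp_inj_on)
  moreover have "rho r = (if i \<le> r then T j r else T (j-1) r)" if "1 \<le> r" "r \<le> c j" for r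
    using chain_id(1)[of r] chain_id(2) vals[of r] that by (cases "r = i") auto
  ultimately show "greedy_inv (gstep n lam T (j,i) pi) j i" unfolding rho_def greedy_inv_def by simp
  show "c j \<le> z \<Longrightarrow> z \<le> n \<Longrightarrow> Pi_set (gstep n lam T (j,i) pi) z = bump (Pi_set pi z) (T j i)"
    using chain(1) t unfolding Pi_set_def rho_def by simp
qed

lemma gstep_equal:
  assumes i: "1 \<le> i" "i \<le> c j" and inv: "greedy_inv pi j (Suc i)" and equal: "T (j-1) i = T j i"
  shows "gstep n lam T (j,i) pi = pi" and "greedy_inv pi j i"
    and "c j \<le> z \<Longrightarrow> bump (Pi_set pi z) (T j i) = Pi_set pi z"
proof -
  show "gstep n lam T (j,i) pi = pi" using equal by (simp add: gstep_def)
  have "pi r = (if i \<le> r then T j r else T (j-1) r)" if "1 \<le> r" "r \<le> c j" for r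
    using inv that equal unfolding greedy_inv_def by (cases "r = i") auto
  then show "greedy_inv pi j i" using inv unfolding greedy_inv_def by simp
  assume "c j \<le> z"
  then have "T j i \<in> Pi_set pi z"
    using inv i equal unfolding greedy_inv_def Pi_set_def by (auto intro!: image_eqI[of _ pi i])
  then show "bump (Pi_set pi z) (T j i) = Pi_set pi z" by (simp add: bump_mem Pi_set_def)
qed

lemma gstep_effect:
  assumes j: "2 \<le> j" and i: "1 \<le> i" "i \<le> c j" and inv: "greedy_inv pi j (Suc i)"
  shows "greedy_inv (gstep n lam T (j,i) pi) j i"
    and "c j \<le> z \<Longrightarrow> z \<le> n \<Longrightarrow> Pi_set (gstep n lam T (j,i) pi) z = bump (Pi_set pi z) (T j i)"
  using gstep_equal[OF i inv] gstep_chain[OF j i inv] by (cases "T (j-1) i = T j i", auto)+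

end

section \<open>The greedy procedure column by column\<close>

lemma filter_upt_ge: "filter (\<lambda>r. i \<le> r) [a..<b] = [max a i..<b]"
  by (induction b) (auto simp: max_def)

context tableau
begin

definition col_locs :: "nat \<Rightarrow> loc list" where
  "col_locs j = map (\<lambda>i. (j,i)) (rev [1..<c j + 1])"

text \<open>pi_col_end j is \<pi>^{(j,1)} (and \<pi>^{(1,1)} for j = 1); pi_in_col j i is \<pi>^{(j,i)}
  for 1 \<le> i \<le> c_j, and pi_in_col j (c_j + 1) is the permutation before column j.\<close>

definition pi_col_end :: "nat \<Rightarrow> nat \<Rightarrow> nat" where
  "pi_col_end j = foldl (\<lambda>rho q. gstep n lam T q rho) (pi11 n lam T) (concat (map col_locs [2..<Suc j]))"

definition pi_in_col :: "nat \<Rightarrow> nat \<Rightarrow> nat \<Rightarrow> nat" where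
  "pi_in_col j i = foldl (\<lambda>rho q. gstep n lam T q rho) (pi_col_end (j-1)) (map (\<lambda>r. (j,r)) (rev [i..<Suc (c j)]))"

lemma greedy_locs_upto:
  assumes j: "2 \<le> j" "j \<le> lam 1" and i: "1 \<le> i"
  shows "filter (\<lambda>q. rle q (j,i)) (greedy_locs n lam) =
     concat (map col_locs [2..<j]) @ map (\<lambda>r. (j,r)) (rev [i..<Suc (c j)])"
proof -
  have split: "[2..<lam 1 + 1] = [2..<j] @ j # [Suc j..<lam 1 + 1]"
    using j by (metis Suc_eq_plus1 le_SucI le_add_diff_inverse le_imp_less_Suc upt_add_eq_append upt_conv_Cons)
  have "filter (\<lambda>q. rle q (j,i)) (concat (map col_locs [2..<j])) = concat (map col_locs [2..<j])"
    by (rule filter_True) (auto simp: col_locs_def rle_def)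
  moreover have "filter (\<lambda>q. rle q (j,i)) (concat (map col_locs [Suc j..<lam 1 + 1])) = []"
    by (rule filter_False) (auto simp: col_locs_def rle_def)
  moreover have "filter (\<lambda>q. rle q (j,i)) (col_locs j) = map (\<lambda>r. (j,r)) (rev [i..<Suc (c j)])"
    unfolding col_locs_def filter_map using i
    by (simp add: rle_def comp_def rev_filter[symmetric] filter_upt_ge max_def)
  ultimately show ?thesis unfolding greedy_locs_def col_locs_def[symmetric] split
    by (simp only: map_append concat_append filter_append list.map concat.simps append_Nil2)
qed

lemma pi_at_eq_pi_in_col: "2 \<le> j \<Longrightarrow> j \<le> lam 1 \<Longrightarrow> 1 \<le> i \<Longrightarrow> pi_at n lam T (j,i) = pi_in_col j i"
  unfolding pi_at_def greedy_locs_upto pi_in_col_def pi_col_end_def by simp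

lemma pi_at_1_1: "pi_at n lam T (1,1) = pi11 n lam T"
proof -
  have "filter (\<lambda>q. rle q (1,1)) (greedy_locs n lam) = []"
    unfolding greedy_locs_def by (rule filter_False) (auto simp: rle_def)
  then show ?thesis unfolding pi_at_def by simp
qed

lemma pi_in_col_step: "1 \<le> i \<Longrightarrow> i \<le> c j \<Longrightarrow> pi_in_col j i = gstep n lam T (j,i) (pi_in_col j (Suc i))"
proof -
  assume "1 \<le> i" "i \<le> c j"
  then have "[i..<Suc (c j)] = i # [Suc i..<Suc (c j)]" by (simp add: upt_conv_Cons)
  then show ?thesis unfolding pi_in_col_def by simp
qed

lemma pi_in_col_top: "pi_in_col j (Suc (c j)) = pi_col_end (j-1)"
  unfolding pi_in_col_def by simp

lemma pi_col_end_eq: "2 \<le> j \<Longrightarrow> pi_col_end j = pi_in_col j 1"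
  unfolding pi_col_end_def pi_in_col_def col_locs_def by simp

lemma pi_col_end_1: "pi_col_end 1 = pi11 n lam T"
  unfolding pi_col_end_def by simp

lemma pi_at_col_start: "1 \<le> j \<Longrightarrow> j \<le> lam 1 \<Longrightarrow> pi_at n lam T (j,1) = pi_col_end j"
  using pi_at_1_1 pi_col_end_1 pi_at_eq_pi_in_col pi_col_end_eq by (cases "j = 1") auto

lemma greedy_inv_pi11: "greedy_inv (pi11 n lam T) 1 1"
proof -
  define A where "A = T 1 ` {1..c 1}"
  define xs where "xs = sorted_list_of_set A @ sorted_list_of_set ({1..n} - A)"
  have pi11: "pi11 n lam T = (\<lambda>r. xs ! (r - 1))" unfolding pi11_def xs_def A_def by simp
  have "sorted_wrt (\<lambda>x y. T 1 x < T 1 y) [1..<Suc (c 1)]"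
    by (rule sorted_wrt_mono_rel[OF _ sorted_wrt_upt]) (use column_strict in auto)
  then have "sorted_wrt (<) (map (T 1) [1..<Suc (c 1)])" by (simp add: sorted_wrt_map)
  then have col: "sorted_list_of_set A = map (T 1) [1..<Suc (c 1)]"
    unfolding A_def by (intro strict_sorted_equal) auto
  have A: "A \<subseteq> {1..n}" unfolding A_def using entry_range[of 1] by auto
  have "finite A" unfolding A_def by simp
  then have set_xs: "set xs = {1..n}" and "distinct xs" unfolding xs_def using A by auto
  then have len: "length xs = n" using distinct_card by fastforce
  have "pi11 n lam T r = T 1 r" if "1 \<le> r" "r \<le> c 1" for r
  proof -
    have "r - 1 < c 1" using that by linarith
    then show ?thesis using that unfolding pi11 xs_def col by (simp add: nth_append del: upt_Suc)
  qed
  moreover have "pi11 n lam T ` {1..n} = {1..n}"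
  proof -
    have "pi11 n lam T ` {1..n} = (!) xs ` ((\<lambda>r. r - 1) ` {1..n})" unfolding pi11 by (simp add: image_image)
    also have "(\<lambda>r. r - 1) ` {1..n} = {..<length xs}"
      unfolding len by (auto simp: image_iff intro!: bexI[of _ "Suc _"])
    also have "(!) xs ` {..<length xs} = set xs" by (auto simp: in_set_conv_nth)
    finally show ?thesis using set_xs by simp
  qed
  ultimately show ?thesis unfolding greedy_inv_def bij_betw_def by (auto intro: eq_card_imp_inj_on)
qed

lemma greedy_inv_pi_in_col:
  assumes j: "2 \<le> j" and start: "greedy_inv (pi_col_end (j-1)) (j-1) 1" and i: "i \<le> Suc (c j)"
  shows "1 \<le> i \<Longrightarrow> greedy_inv (pi_in_col j i) j i"
  using i
proof (induction i rule: inc_induct)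
  case base
  then show ?case using start collen_antimono[of "j-1" j] unfolding greedy_inv_def pi_in_col_top by auto
next
  case (step i)
  then show ?case using gstep_effect(1)[OF j] pi_in_col_step by simp
qed

lemma greedy_inv_pi_col_end: "1 \<le> j \<Longrightarrow> greedy_inv (pi_col_end j) j 1"
proof (induction j)
  case (Suc j)
  then show ?case
    using greedy_inv_pi11 pi_col_end_1 greedy_inv_pi_in_col[of "Suc j" 1] pi_col_end_eq[of "Suc j"]
    by (cases "j = 0") auto
qed simp

lemma Pi_set_pi_col_end_column: "1 \<le> j \<Longrightarrow> Pi_set (pi_col_end j) (c j) = T j ` {1..c j}"
  using greedy_inv_pi_col_end unfolding Pi_set_def greedy_inv_def by (intro image_cong) auto

lemma Pi_set_pi_in_col_bump:
  assumes "2 \<le> j" "1 \<le> i" "i \<le> c j" "c j \<le> z" "z \<le> n"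
  shows "Pi_set (pi_in_col j i) z = bump (Pi_set (pi_in_col j (Suc i)) z) (T j i)"
  using assms gstep_effect(2) greedy_inv_pi_in_col greedy_inv_pi_col_end pi_in_col_step by simp

end

section \<open>Scanning paths\<close>

locale scanning = tableau +
  fixes l :: nat
  assumes l_pos: "1 \<le> l" and l_le: "l \<le> lam 1"
begin

abbreviation z where "z \<equiv> c l"

text \<open>A shape inside \<lambda> that is a union of top-justified columns is given by its column
  heights H. The scanning path of column l in it takes the lowest box (j, H j) of column j
  (path_takes) iff the EWIS does, and path_val H j is its value after columns l..j. heights m
  are the column heights left after deleting P(T;l,c_l), ..., P(T;l,c_l-m+1), so
  path_of (heights m) is P(T;l,c_l-m) (P_eq_path_of).\<close>

definition path_step :: "(nat \<Rightarrow> nat) \<Rightarrow> nat \<Rightarrow> nat \<Rightarrow> nat" where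
  "path_step H v j = (if 1 \<le> H j \<and> v \<le> T j (H j) then T j (H j) else v)"

definition path_val :: "(nat \<Rightarrow> nat) \<Rightarrow> nat \<Rightarrow> nat" where
  "path_val H j = foldl (path_step H) (T l (H l)) [Suc l..<Suc j]"

definition path_takes :: "(nat \<Rightarrow> nat) \<Rightarrow> nat \<Rightarrow> bool" where
  "path_takes H j \<longleftrightarrow> j = l \<or> (l < j \<and> 1 \<le> H j \<and> path_val H (j-1) \<le> T j (H j))"

definition path_of :: "(nat \<Rightarrow> nat) \<Rightarrow> loc set" where
  "path_of H = (\<lambda>j. (j, H j)) ` {j. l \<le> j \<and> j \<le> lam 1 \<and> path_takes H j}"

primrec heights :: "nat \<Rightarrow> nat \<Rightarrow> nat" where
  "heights 0 = (\<lambda>j. c j)"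
| "heights (Suc m) = (\<lambda>j. if l \<le> j \<and> j \<le> lam 1 \<and> path_takes (heights m) j then heights m j - 1 else heights m j)"

lemma ewis_from_set:
  "set (ewis_from v (map (\<lambda>j. ((j, H j), T j (H j))) (filter (\<lambda>j. 1 \<le> H j) [a..<b]))) =
   (\<lambda>j. (j, H j)) ` {j \<in> {a..<b}. 1 \<le> H j \<and> foldl (path_step H) v [a..<j] \<le> T j (H j)}"
proof (induction "b - a" arbitrary: a v)
  case (Suc d)
  then have up: "[a..<b] = a # [Suc a..<b]" by (simp add: upt_conv_Cons)
  have "{j \<in> {a..<b}. 1 \<le> H j \<and> foldl (path_step H) v [a..<j] \<le> T j (H j)} =
      (if 1 \<le> H a \<and> v \<le> T a (H a) then {a} else {}) \<union>
      {j \<in> {Suc a..<b}. 1 \<le> H j \<and> foldl (path_step H) (path_step H v a) [Suc a..<j] \<le> T j (H j)}"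
    using Suc.hyps(2) by (auto simp: upt_conv_Cons Suc_le_eq le_less)
  then show ?case using Suc.hyps(1)[of "Suc a"] Suc.hyps(2) unfolding up by (auto simp: path_step_def)
qed simp

lemma path_val_foldl: "l < j \<Longrightarrow> foldl (path_step H) (T l (H l)) [Suc l..<j] = path_val H (j - 1)"
  unfolding path_val_def by (simp add: Suc_diff_1)

lemma scan_seq_heights:
  assumes R: "\<And>j i. (j,i) \<in> Rs \<longleftrightarrow> 1 \<le> j \<and> 1 \<le> i \<and> i \<le> H j"
  shows "scan_seq lam T l Rs = map (\<lambda>j. ((j, H j), T j (H j))) (filter (\<lambda>j. 1 \<le> H j) [l..<lam 1 + 1])"
proof -
  have low: "lowest Rs j = H j" if "1 \<le> j" "1 \<le> H j" for j
  proof -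
    have "{i. (j,i) \<in> Rs} = {1..H j}" using R that by auto
    moreover have "Max {1..H j} = H j" by (rule Max_eqI) (use that in auto)
    ultimately show ?thesis unfolding lowest_def by simp
  qed
  have "filter (\<lambda>j. \<exists>i. (j,i) \<in> Rs) [l..<lam 1 + 1] = filter (\<lambda>j. 1 \<le> H j) [l..<lam 1 + 1]"
    using R l_pos by (intro filter_cong) auto
  then show ?thesis unfolding scan_seq_def using low l_pos by (auto intro!: map_cong)
qed

lemma scan_path_set:
  assumes R: "\<And>j i. (j,i) \<in> Rs \<longleftrightarrow> 1 \<le> j \<and> 1 \<le> i \<and> i \<le> H j" and Hl: "1 \<le> H l"
  shows "set (scan_path lam T l Rs) = path_of H"
proof -
  let ?seq = "map (\<lambda>j. ((j, H j), T j (H j))) (filter (\<lambda>j. 1 \<le> H j) [Suc l..<lam 1 + 1])"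
  have "filter (\<lambda>j. 1 \<le> H j) [l..<lam 1 + 1] = l # filter (\<lambda>j. 1 \<le> H j) [Suc l..<lam 1 + 1]"
    using Hl l_le by (simp add: upt_conv_Cons del: upt_Suc)
  then have "scan_path lam T l Rs = (l, H l) # ewis_from (T l (H l)) ?seq"
    unfolding scan_path_def scan_seq_heights[OF R] by (simp only: list.map ewis.simps)
  then have "set (scan_path lam T l Rs) = insert (l, H l) (set (ewis_from (T l (H l)) ?seq))" by simp
  also have "\<dots> = insert (l, H l) ((\<lambda>j. (j, H j)) `
      {j \<in> {Suc l..<lam 1 + 1}. 1 \<le> H j \<and> foldl (path_step H) (T l (H l)) [Suc l..<j] \<le> T j (H j)})"
    by (simp only: ewis_from_set)
  also have "\<dots> = path_of H"
    using l_le path_val_foldl unfolding path_of_def path_takes_def by (auto simp: Suc_le_eq)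
  finally show ?thesis .
qed

lemma path_val_start: "path_val H l = T l (H l)" unfolding path_val_def by simp

lemma path_val_Suc: "l \<le> j \<Longrightarrow> path_val H (Suc j) = path_step H (path_val H j) (Suc j)"
  unfolding path_val_def by simp

lemma path_takes_start: "path_takes H l" unfolding path_takes_def by simp

lemma path_takes_pos: "l < j \<Longrightarrow> path_takes H j \<Longrightarrow> 1 \<le> H j" unfolding path_takes_def by auto

lemma path_val_takes: "l \<le> j \<Longrightarrow> path_takes H j \<Longrightarrow> path_val H j = T j (H j)"
  using path_val_start path_val_Suc[of "j - 1" H] unfolding path_takes_def
  by (cases "j = l") (auto simp: path_step_def)

lemma path_val_skips: "l < j \<Longrightarrow> \<not> path_takes H j \<Longrightarrow> path_val H j = path_val H (j-1)"
  using path_val_Suc[of "j - 1" H] unfolding path_takes_def by (auto simp: path_step_def)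

lemma path_val_mono: "l < j \<Longrightarrow> path_val H (j-1) \<le> path_val H j"
  using path_val_Suc[of "j - 1" H] by (auto simp: path_step_def)

lemma path_val_takes_le: "l < j \<Longrightarrow> path_takes H j \<Longrightarrow> path_val H (j-1) \<le> T j (H j)"
  unfolding path_takes_def by auto

lemma path_val_skips_gt: "l < j \<Longrightarrow> \<not> path_takes H j \<Longrightarrow> 1 \<le> H j \<Longrightarrow> T j (H j) < path_val H (j-1)"
  unfolding path_takes_def by auto

lemma heights_Suc_le: "heights (Suc m) j \<le> heights m j" by simp

lemma heights_le: "heights m j \<le> c j"
proof (induction m)
  case 0 then show ?case by simp
next
  case (Suc m) then show ?case using heights_Suc_le[of m j] by linarith
qed

lemma heights_Suc_ge: "heights m j - 1 \<le> heights (Suc m) j" by simp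

lemma heights_antimono: "m \<le> m' \<Longrightarrow> heights m' j \<le> heights m j"
proof (induction m' rule: dec_induct)
  case base then show ?case by simp
next
  case (step m') then show ?case using heights_Suc_le[of m' j] by linarith
qed

lemma path_takes_le_lam: "l \<le> j \<Longrightarrow> path_takes (heights m) j \<Longrightarrow> j \<le> lam 1"
  using l_le path_takes_pos[of j "heights m"] heights_le[of m j] collen_beyond[of j]
  by (cases "j = l"; cases "lam 1 < j") auto

lemma heights_Suc_takes: "l \<le> j \<Longrightarrow> path_takes (heights m) j \<Longrightarrow> heights (Suc m) j = heights m j - 1"
  using path_takes_le_lam by simp

lemma heights_Suc_skips: "\<not> path_takes (heights m) j \<Longrightarrow> heights (Suc m) j = heights m j"
  by simp

lemma heights_start: "heights m l = z - m"
proof (induction m)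
  case 0 then show ?case by simp
next
  case (Suc m) then show ?case using heights_Suc_takes[of l m] path_takes_start by simp
qed

lemma remaining_shape:
  "m \<le> z \<Longrightarrow> (j,i) \<in> shape n lam - removed n lam T l m \<longleftrightarrow> 1 \<le> j \<and> 1 \<le> i \<and> i \<le> heights m j"
proof (induction m arbitrary: j i)
  case 0
  then show ?case using in_shape_iff by simp
next
  case (Suc m)
  have R: "\<And>j i. (j,i) \<in> shape n lam - removed n lam T l m \<longleftrightarrow> 1 \<le> j \<and> 1 \<le> i \<and> i \<le> heights m j"
    using Suc by simp
  have "1 \<le> heights m l" using heights_start Suc.prems by simp
  then have "removed n lam T l (Suc m) = removed n lam T l m \<union> path_of (heights m)"
    using scan_path_set[OF R] by simp
  then show ?case using R[of j i] unfolding path_of_def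
    by (cases "l \<le> j \<and> j \<le> lam 1 \<and> path_takes (heights m) j") auto
qed

lemma P_eq_path_of: "1 \<le> k \<Longrightarrow> k \<le> z \<Longrightarrow> P n lam T l k = path_of (heights (z - k))"
proof -
  assume k: "1 \<le> k" "k \<le> z"
  have R: "\<And>j i. (j,i) \<in> shape n lam - removed n lam T l (z - k) \<longleftrightarrow> 1 \<le> j \<and> 1 \<le> i \<and> i \<le> heights (z - k) j"
    using remaining_shape[of "z - k"] by simp
  have Hl: "1 \<le> heights (z - k) l" using heights_start k by simp
  show ?thesis unfolding P_def using scan_path_set[OF R Hl] by simp
qed

lemma path_takes_level:
  assumes lj: "l < j" and takes: "path_takes (heights m) (j-1)"
    and eq: "heights m j = heights m (j-1)" and pos: "1 \<le> heights m j"
  shows "path_takes (heights m) j"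
proof -
  have "path_val (heights m) (j-1) = T (j-1) (heights m j)" using path_val_takes lj takes eq by simp
  also have "\<dots> \<le> T j (heights m j)" using row_mono lj l_pos pos heights_le[of m j] by simp
  finally show ?thesis unfolding path_takes_def using lj pos by simp
qed

lemma heights_row_antimono: "l < j \<Longrightarrow> heights m j \<le> heights m (j-1)"
proof (induction m)
  case 0
  then show ?case using collen_antimono[of "j-1" j] by simp
next
  case (Suc m)
  show ?case
  proof (cases "heights m j = heights m (j-1) \<and> 1 \<le> heights m j \<and> path_takes (heights m) (j-1)")
    case True
    then have "path_takes (heights m) j" using path_takes_level Suc.prems by blast
    then show ?thesis using True Suc.prems heights_Suc_takes[of j m] heights_Suc_takes[of "j-1" m] by simp
  next
    case skip: False
    show ?thesis
    proof (cases "heights m j = heights m (j-1)")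
      case True
      then show ?thesis using skip heights_Suc_le[of m j] heights_Suc_skips[of m "j-1"] by fastforce
    next
      case False
      then show ?thesis using Suc heights_Suc_le[of m j] heights_Suc_ge[of m "j-1"] by linarith
    qed
  qed
qed

lemma heights_exhausted: "l \<le> j \<Longrightarrow> heights z j = 0"
proof (induction j rule: dec_induct)
  case base then show ?case using heights_start by simp
next
  case (step j)
  then show ?case using heights_row_antimono[of "Suc j" z] by simp
qed

lemma path_val_strict:
  assumes m: "m < m'" "m' < z"
  shows "l \<le> j \<Longrightarrow> path_val (heights m') j < path_val (heights m) j"
proof (induction j rule: dec_induct)
  case base
  have "T l (z - m') < T l (z - m)" using column_strict[of l "z - m'" "z - m"] m l_pos by simp
  then show ?case using path_val_start heights_start by simp
next
  case (step j)
  have lj: "l < Suc j" using step by simp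
  show ?case
  proof (cases "path_takes (heights m') (Suc j)")
    case False
    then show ?thesis using step.IH path_val_skips[OF lj] path_val_mono[OF lj, of "heights m"] by simp
  next
    case takes': True
    have pos': "1 \<le> heights m' (Suc j)" using path_takes_pos[OF lj takes'] .
    have below: "heights m' (Suc j) \<le> heights (Suc m) (Suc j)" using m by (intro heights_antimono) simp
    show ?thesis
    proof (cases "path_takes (heights m) (Suc j)")
      case True
      then have "heights m' (Suc j) < heights m (Suc j)"
        using below pos' heights_Suc_takes[of "Suc j" m] lj by fastforce
      then have "T (Suc j) (heights m' (Suc j)) < T (Suc j) (heights m (Suc j))"
        using column_strict pos' heights_le by simp
      then show ?thesis using path_val_takes lj True takes' by simp
    next
      case False
      have le: "heights m' (Suc j) \<le> heights m (Suc j)" using m by (intro heights_antimono) simp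
      then have "T (Suc j) (heights m' (Suc j)) \<le> T (Suc j) (heights m (Suc j))"
        using column_mono pos' heights_le by simp
      also have "\<dots> < path_val (heights m) j" using path_val_skips_gt[OF lj False] le pos' by simp
      also have "\<dots> = path_val (heights m) (Suc j)" using path_val_skips[OF lj False] by simp
      finally show ?thesis using path_val_takes lj takes' by simp
    qed
  qed
qed

end

section \<open>Most recent values of the scanning paths\<close>

lemma image_update_bump:
  fixes f g :: "nat \<Rightarrow> nat"
  assumes A: "finite A" "p \<in> A" and fp: "f p = t" and gp: "g p = M" "M \<le> t"
    and others: "\<And>m. m \<in> A \<Longrightarrow> m \<noteq> p \<Longrightarrow> f m = g m \<and> (t < g m \<or> g m < M)"
  shows "f ` A = bump (g ` A) t"
proof -
  have "Max {x \<in> g ` A. x \<le> t} = M"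
    using A gp others by (intro Max_eqI) (auto, force)
  moreover have "g ` A - {M} = g ` (A - {p})" using A gp others by force
  moreover have "f ` A = insert t (g ` (A - {p}))" using A fp others by force
  ultimately show ?thesis unfolding bump_def by auto
qed

context scanning
begin

text \<open>cur_val m j i is the most recent value of P(T;l,c_l-m) when the scan reaches box (j,i);
  cur_vals j i is U(T;l,j,i) (U_eq_cur_vals).\<close>

definition cur_val :: "nat \<Rightarrow> nat \<Rightarrow> nat \<Rightarrow> nat" where
  "cur_val m j i = (if path_takes (heights m) j \<and> i \<le> heights m j
     then path_val (heights m) j else path_val (heights m) (j-1))"

definition cur_vals :: "nat \<Rightarrow> nat \<Rightarrow> nat set" where
  "cur_vals j i = (\<lambda>m. cur_val m j i) ` {..<z}"

lemma cur_val_first_row: "l \<le> j \<Longrightarrow> m < z \<Longrightarrow> cur_val m j 1 = path_val (heights m) j"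
  unfolding cur_val_def using heights_start path_takes_start path_takes_pos[of j "heights m"]
    path_val_skips[of j "heights m"] by (cases "j = l") auto

lemma cur_vals_top:
  assumes lj: "l < j" shows "cur_vals j (Suc (c j)) = cur_vals (j-1) 1"
proof -
  have "cur_val m j (Suc (c j)) = cur_val m (j-1) 1" if "m < z" for m
  proof -
    have "cur_val m j (Suc (c j)) = path_val (heights m) (j-1)"
      unfolding cur_val_def using heights_le[of m j] by simp
    then show ?thesis using cur_val_first_row[of "j-1" m] lj that by simp
  qed
  then show ?thesis unfolding cur_vals_def by (intro image_cong) auto
qed

lemma reverse_index: "(\<lambda>k. F (z - k)) ` {1..z} = F ` {..<z}"
proof -
  have "(\<lambda>k. z - k) ` {1..z} = {..<z}"
  proof
    show "{..<z} \<subseteq> (\<lambda>k. z - k) ` {1..z}"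
    proof
      fix m assume "m \<in> {..<z}"
      then show "m \<in> (\<lambda>k. z - k) ` {1..z}" by (intro image_eqI[of m _ "z - m"]) auto
    qed
  qed auto
  then show ?thesis by (metis image_image)
qed

lemma cur_vals_start: "cur_vals l 1 = T l ` {1..z}"
proof -
  have "cur_vals l 1 = (\<lambda>m. T l (z - m)) ` {..<z}"
    unfolding cur_vals_def using cur_val_first_row path_val_start heights_start by (intro image_cong) auto
  also have "\<dots> = (\<lambda>k. T l (z - (z - k))) ` {1..z}" by (rule reverse_index[symmetric])
  also have "\<dots> = T l ` {1..z}" by (intro image_cong) auto
  finally show ?thesis .
qed

lemma path_through_box:
  assumes lj: "l < j" and i: "1 \<le> i" "i \<le> c j"
  obtains p where "p < z" "path_takes (heights p) j" "heights p j = i" "heights (Suc p) j < i"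
proof -
  have "heights z j < i" using heights_exhausted lj i by simp
  then have ex: "\<exists>m. heights m j < i" by blast
  define q where "q = (LEAST m. heights m j < i)"
  have hq: "heights q j < i" unfolding q_def using ex by (rule LeastI_ex)
  have "q \<noteq> 0" using hq i by (cases q) auto
  then obtain p where qp: "q = Suc p" by (cases q) auto
  have hp: "i \<le> heights p j" using not_less_Least[of p "\<lambda>m. heights m j < i"] qp q_def by simp
  have takes: "path_takes (heights p) j" using hp hq qp heights_Suc_skips by fastforce
  then have hpi: "heights p j = i" using heights_Suc_takes[of j p] lj hp hq qp by simp
  have "p < z"
  proof (rule ccontr)
    assume "\<not> p < z"
    then have "heights p j \<le> heights z j" using heights_antimono by simp
    then show False using heights_exhausted[of j] lj hpi i by simp
  qed
  with takes hpi hq qp that show ?thesis by simp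
qed

lemma cur_val_above_row:
  assumes lj: "l < j" and i: "1 \<le> i" and covered: "i \<le> heights (Suc m) j"
  shows "cur_val m j i = cur_val m j (Suc i) \<and> T j i < cur_val m j (Suc i)"
proof (cases "path_takes (heights m) j")
  case True
  then have "Suc i \<le> heights m j" using heights_Suc_takes[of j m] lj covered i by simp
  then have "T j i < T j (heights m j)" using column_strict lj l_pos i heights_le by simp
  then show ?thesis unfolding cur_val_def using True \<open>Suc i \<le> heights m j\<close> path_val_takes lj by simp
next
  case False
  then have "i \<le> heights m j" using covered by simp
  then have "T j i \<le> T j (heights m j)" using column_mono lj l_pos i heights_le by simp
  also have "\<dots> < path_val (heights m) (j-1)" using path_val_skips_gt[OF lj False] \<open>i \<le> heights m j\<close> i by simp
  finally show ?thesis unfolding cur_val_def using False by simp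
qed

lemma cur_vals_bump:
  assumes lj: "l < j" and i: "1 \<le> i" "i \<le> c j"
  shows "cur_vals j i = bump (cur_vals j (Suc i)) (T j i)"
proof -
  obtain p where p: "p < z" "path_takes (heights p) j" "heights p j = i" "heights (Suc p) j < i"
    using path_through_box[OF lj i] .
  define M where "M = path_val (heights p) (j-1)"
  have others: "cur_val m j i = cur_val m j (Suc i) \<and> (T j i < cur_val m j (Suc i) \<or> cur_val m j (Suc i) < M)"
    if m: "m < z" "m \<noteq> p" for m
  proof (cases "m < p")
    case True
    then have "i \<le> heights (Suc m) j" using heights_antimono[of "Suc m" p j] p(3) by simp
    then show ?thesis using cur_val_above_row[OF lj i(1)] by simp
  next
    case False
    then have "p < m" using m(2) by simp
    then have "heights m j < i" using heights_antimono[of "Suc p" m j] p(4) by simp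
    moreover have "path_val (heights m) (j-1) < M" unfolding M_def using path_val_strict \<open>p < m\<close> m lj by simp
    ultimately show ?thesis unfolding cur_val_def by simp
  qed
  have "(\<lambda>m. cur_val m j i) ` {..<z} = bump ((\<lambda>m. cur_val m j (Suc i)) ` {..<z}) (T j i)"
  proof (rule image_update_bump[where A = "{..<z}" and p = p and M = M])
    show "cur_val p j i = T j i" unfolding cur_val_def using p path_val_takes[of j] lj by simp
    show "cur_val p j (Suc i) = M" unfolding cur_val_def M_def using p by simp
    show "M \<le> T j i" unfolding M_def using path_val_takes_le[OF lj p(2)] p by simp
  qed (use p others in auto)
  then show ?thesis unfolding cur_vals_def .
qed

end

section \<open>The sets U(T;l,j,i)\<close>

lemma rle_antisym: "rle p q \<Longrightarrow> rle q p \<Longrightarrow> p = q"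
  unfolding rle_def by (cases p, cases q) auto

lemma rmax_eq: "q \<in> S \<Longrightarrow> \<forall>p\<in>S. rle p q \<Longrightarrow> rmax S = q"
  unfolding rmax_def by (rule the_equality) (auto intro: rle_antisym)

context scanning
begin

lemma path_of_box:
  assumes "q \<in> path_of (heights m)" "m < z" shows "1 \<le> snd q \<and> snd q \<le> c (fst q)"
proof -
  obtain j where j: "q = (j, heights m j)" "l \<le> j" "path_takes (heights m) j"
    using assms(1) unfolding path_of_def by auto
  then have "1 \<le> heights m j" using heights_start path_takes_pos assms(2) by (cases "j = l") auto
  then show ?thesis using j heights_le by simp
qed

lemma last_taken_column:
  "l \<le> j' \<Longrightarrow> \<exists>j0. l \<le> j0 \<and> j0 \<le> j' \<and> path_takes H j0 \<and> path_val H j' = path_val H j0 \<and>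
     (\<forall>j. j0 < j \<and> j \<le> j' \<longrightarrow> \<not> path_takes H j)"
proof (induction j' rule: dec_induct)
  case base
  then show ?case using path_takes_start by auto
next
  case (step j')
  show ?case
  proof (cases "path_takes H (Suc j')")
    case True
    then show ?thesis using step.hyps by (intro exI[of _ "Suc j'"]) auto
  next
    case False
    then show ?thesis using step path_val_skips[of "Suc j'" H] by (auto simp: le_Suc_eq)
  qed
qed

lemma rmax_path_upto:
  assumes j': "l \<le> j'" "j' \<le> lam 1"
  shows "(case rmax {q \<in> path_of H. fst q \<le> j'} of (x,y) \<Rightarrow> T x y) = path_val H j'"
proof -
  obtain j0 where j0: "l \<le> j0" "j0 \<le> j'" "path_takes H j0" "path_val H j' = path_val H j0"
    "\<And>j. j0 < j \<Longrightarrow> j \<le> j' \<Longrightarrow> \<not> path_takes H j"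
    using last_taken_column[OF j'(1)] by blast
  have "rmax {q \<in> path_of H. fst q \<le> j'} = (j0, H j0)"
  proof (rule rmax_eq)
    show "(j0, H j0) \<in> {q \<in> path_of H. fst q \<le> j'}" using j0 j' unfolding path_of_def by auto
    show "\<forall>p \<in> {q \<in> path_of H. fst q \<le> j'}. rle p (j0, H j0)"
    proof
      fix p assume "p \<in> {q \<in> path_of H. fst q \<le> j'}"
      then obtain x where x: "p = (x, H x)" "x \<le> j'" "path_takes H x" unfolding path_of_def by auto
      then have "x \<le> j0" using j0(5) by (meson not_le)
      then show "rle p (j0, H j0)" using x unfolding rle_def by auto
    qed
  qed
  then show ?thesis using j0 path_val_takes by simp
qed

lemma rmax_path_before:
  assumes lj: "l \<le> j" "j \<le> lam 1" and i1: "1 \<le> i" and jl: "j = l \<Longrightarrow> i = 1" and m: "m < z"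
  shows "(case rmax {q \<in> path_of (heights m). fst q < j \<or> (fst q = j \<and> i \<le> snd q)} of (x,y) \<Rightarrow> T x y)
    = cur_val m j i"
proof (cases "path_takes (heights m) j \<and> i \<le> heights m j")
  case True
  have "rmax {q \<in> path_of (heights m). fst q < j \<or> (fst q = j \<and> i \<le> snd q)} = (j, heights m j)"
  proof (rule rmax_eq)
    show "(j, heights m j) \<in> {q \<in> path_of (heights m). fst q < j \<or> (fst q = j \<and> i \<le> snd q)}"
      using True lj unfolding path_of_def by auto
  qed (auto simp: path_of_def rle_def)
  then show ?thesis unfolding cur_val_def using True path_val_takes lj by simp
next
  case False
  have lj': "l < j" using False jl path_takes_start heights_start m lj(1) by fastforce
  have "{q \<in> path_of (heights m). fst q < j \<or> (fst q = j \<and> i \<le> snd q)} = {q \<in> path_of (heights m). fst q \<le> j - 1}"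
    using False lj' unfolding path_of_def by auto
  moreover have "cur_val m j i = path_val (heights m) (j-1)" unfolding cur_val_def using False by (rule if_not_P)
  ultimately show ?thesis using rmax_path_upto[of "j-1" "heights m"] lj' lj(2) by simp
qed

lemma rlt_prev_row_loc_iff:
  assumes q: "q \<in> path_of (heights m)" and m: "m < z" and i1: "1 \<le> i"
  shows "rlt q (prev_row_loc n lam (j,i)) \<longleftrightarrow> fst q < j \<or> (fst q = j \<and> i \<le> snd q)"
proof -
  have qs: "1 \<le> snd q" "snd q \<le> c (fst q)" using path_of_box[OF q m] by auto
  show ?thesis
  proof (cases "i = 1")
    case True
    then have pr: "prev_row_loc n lam (j,i) = (j+1, c (j+1))" unfolding prev_row_loc_def by simp
    have "rlt q (j+1, c (j+1)) \<longleftrightarrow> fst q < j + 1"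
    proof
      assume "rlt q (j+1, c (j+1))"
      then have "rle q (j+1, c (j+1))" "q \<noteq> (j+1, c (j+1))" unfolding rlt_def by auto
      then show "fst q < j + 1" using qs unfolding rle_def by (cases q) auto
    next
      assume "fst q < j + 1"
      then show "rlt q (j+1, c (j+1))" unfolding rlt_def rle_def by auto
    qed
    then show ?thesis using pr True qs by auto
  next
    case False
    then have pr: "prev_row_loc n lam (j,i) = (j, i - 1)" unfolding prev_row_loc_def by simp
    show ?thesis unfolding pr rlt_def rle_def using False i1 by (cases q) auto
  qed
qed

lemma final_value_path:
  assumes k: "k \<in> {1..z}"
  shows "(case rmax (P n lam T l k) of (x,y) \<Rightarrow> T x y) = cur_val (z - k) (lam 1) 1"
proof -
  have "P n lam T l k = {q \<in> path_of (heights (z - k)). fst q \<le> lam 1}"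
    using P_eq_path_of k unfolding path_of_def by auto
  then show ?thesis using rmax_path_upto[of "lam 1"] cur_val_first_row[of "lam 1" "z - k"] l_le k by simp
qed

lemma most_recent_path:
  assumes j: "l \<le> j" "j \<le> lam 1" and i: "1 \<le> i" and jl: "j = l \<Longrightarrow> i = 1" and k: "k \<in> {1..z}"
  shows "most_recent T (P n lam T l k) (prev_row_loc n lam (j,i)) = cur_val (z - k) j i"
proof -
  have m: "z - k < z" using k by auto
  have "{q \<in> P n lam T l k. rlt q (prev_row_loc n lam (j,i))} =
      {q \<in> path_of (heights (z - k)). fst q < j \<or> (fst q = j \<and> i \<le> snd q)}"
    using P_eq_path_of[of k] k rlt_prev_row_loc_iff[OF _ m i] by auto
  then show ?thesis unfolding most_recent_def using rmax_path_before[OF j i jl m] by simp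
qed

lemma U_eq_cur_vals:
  assumes j: "l \<le> j" "j \<le> lam 1" and i: "1 \<le> i" and jl: "j = l \<Longrightarrow> i = 1"
  shows "U n lam T l j i = cur_vals j i"
proof -
  consider "l = lam 1 \<and> j = lam 1 \<and> i = 1" | "\<not> l = lam 1" "(j,i) = (lam 1, 1)" | "(j,i) \<noteq> (lam 1, 1)"
    by blast
  then show ?thesis
  proof cases
    case 1
    then show ?thesis unfolding U_def using cur_vals_start by simp
  next
    case 2
    then have "U n lam T l j i = (\<lambda>k. cur_val (z - k) j i) ` {1..z}"
      unfolding U_def using final_value_path by (auto intro: image_cong)
    then show ?thesis unfolding cur_vals_def using reverse_index[of "\<lambda>m. cur_val m j i"] by simp
  next
    case 3
    then have "U n lam T l j i = (\<lambda>k. cur_val (z - k) j i) ` {1..z}"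
      unfolding U_def using most_recent_path[OF j i jl] by (auto intro: image_cong)
    then show ?thesis unfolding cur_vals_def using reverse_index[of "\<lambda>m. cur_val m j i"] by simp
  qed
qed

section \<open>Comparison of the two procedures\<close>

lemma Pi_set_pi_in_col_cur_vals:
  assumes lj: "l < j" and prev: "Pi_set (pi_col_end (j-1)) z = cur_vals (j-1) 1" and i: "i \<le> Suc (c j)"
  shows "1 \<le> i \<Longrightarrow> Pi_set (pi_in_col j i) z = cur_vals j i"
  using i
proof (induction i rule: inc_induct)
  case base
  then show ?case using prev pi_in_col_top cur_vals_top[OF lj] by simp
next
  case (step i)
  have "2 \<le> j" "c j \<le> z" using lj l_pos collen_antimono[of l j] by auto
  then show ?case
    using step Pi_set_pi_in_col_bump[of j i z] collen_le cur_vals_bump[OF lj] by simp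
qed

lemma Pi_set_pi_col_end_cur_vals: "l \<le> j \<Longrightarrow> j \<le> lam 1 \<Longrightarrow> Pi_set (pi_col_end j) z = cur_vals j 1"
proof (induction j rule: dec_induct)
  case base
  then show ?case using Pi_set_pi_col_end_column l_pos cur_vals_start by simp
next
  case (step j)
  then have "Pi_set (pi_in_col (Suc j) 1) z = cur_vals (Suc j) 1"
    using Pi_set_pi_in_col_cur_vals[of "Suc j" 1] by simp
  then show ?case using pi_col_end_eq[of "Suc j"] l_pos step.hyps by simp
qed

lemma Pi_set_pi_at_eq_U:
  assumes r: "rle (l,1) (j,i)" and pd: "pi_defined n lam (j,i)"
  shows "Pi_set (pi_at n lam T (j,i)) z = U n lam T l j i"
proof (cases "j = l")
  case True
  then have "i = 1" using r pd l_pos unfolding rle_def pi_defined_def in_shape_iff by auto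
  then show ?thesis
    using True pi_at_col_start Pi_set_pi_col_end_cur_vals U_eq_cur_vals[of l 1] l_pos l_le by simp
next
  case False
  then have lj: "l < j" using r unfolding rle_def by simp
  then have i: "1 \<le> i" "i \<le> c j" and j: "2 \<le> j"
    using pd l_pos unfolding pi_defined_def in_shape_iff by auto
  then have "j \<le> lam 1" using collen_beyond[of j] by (cases "lam 1 < j") auto
  then show ?thesis using pi_at_eq_pi_in_col[OF j _ i(1)] Pi_set_pi_in_col_cur_vals[OF lj] i lj
      Pi_set_pi_col_end_cur_vals[of "j-1"] U_eq_cur_vals[of j i] by simp
qed

end

lemma (in tableau) beta_column:
  assumes "1 \<le> h" "h \<le> ndist n lam"
  shows "1 \<le> beta n lam h \<and> beta n lam h \<le> lam 1 \<and> c (beta n lam h) = zeta n lam h"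
proof -
  have "finite (col_lengths n lam)" unfolding col_lengths_def by simp
  moreover have "h - 1 < length (sorted_list_of_set (col_lengths n lam))"
    using assms calculation unfolding ndist_def by simp
  then have "zeta n lam h \<in> set (sorted_list_of_set (col_lengths n lam))"
    unfolding zeta_def by (rule nth_mem)
  ultimately have "zeta n lam h \<in> col_lengths n lam" by simp
  then have "{j\<in>{1..lam 1}. c j = zeta n lam h} \<noteq> {}" unfolding col_lengths_def by auto
  then have "beta n lam h \<in> {j\<in>{1..lam 1}. c j = zeta n lam h}" unfolding beta_def by (intro Max_in) auto
  then show ?thesis by simp
qed

theorem proposition5p1:
  fixes n :: nat and lam :: "nat \<Rightarrow> nat" and T :: "nat \<Rightarrow> nat \<Rightarrow> nat" and h j i :: nat
  assumes "is_partition n lam"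
    and "semistandard n lam T"
    and "1 \<le> h" and "h \<le> ndist n lam"
    and "rle (beta n lam h, 1) (j, i)"
    and "pi_defined n lam (j, i)"
  shows "Pi_set (pi_at n lam T (j, i)) (zeta n lam h) = U n lam T (beta n lam h) j i"
proof -
  interpret tableau n lam T using assms(1,2) by unfold_locales
  have beta: "1 \<le> beta n lam h" "beta n lam h \<le> lam 1" "c (beta n lam h) = zeta n lam h"
    using beta_column[OF assms(3,4)] by auto
  interpret scanning n lam T "beta n lam h" using beta(1,2) by unfold_locales
  show ?thesis using Pi_set_pi_at_eq_U[OF assms(5,6)] beta(3) by simp
qed

end
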